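(* Let $n$ and $b$ be odd positive integers with $n\nmid b$, let $m$ be an even positive integer, and let $q=\gcd(n,b)$. Then $b+m$ and $b-m$ do not both lie in the interval $(n-q,n+q)$ modulo $2n$.
   Context: An integer $x$ lies in the interval $(n-q,n+q)$ modulo $2n$ if some integer congruent to $x$ modulo $2n$ lies in that open real interval. *)

theory Defs
  imports Main
begin

definition in_interval_mod :: "int \<Rightarrow> int \<Rightarrow> int \<Rightarrow> int \<Rightarrow> bool" where
  "in_interval_mod M a b x \<longleftrightarrow> (\<exists>y::int. y mod M = x mod M \<and> a < y \<and> y < b)"

end

theory Submission
  imports Defs
begin

text \<open>If \<open>b + m\<close> and \<open>b - m\<close> had representatives \<open>y\<^sub>1, y\<^sub>2\<close> modulo \<open>2n\<close> in
  \<open>(n - q, n + q)\<close>, their midpoint \<open>(y\<^sub>1 + y\<^sub>2)/2\<close> would be an integer in the same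
  interval congruent to \<open>b\<close> modulo \<open>n\<close>. Being congruent to \<open>b\<close>, it is a multiple of
  \<open>q\<close>, and the only multiple of \<open>q\<close> in \<open>(n - q, n + q)\<close> is \<open>n\<close> itself; hence \<open>n\<close>
  divides \<open>b\<close>.\<close>

lemma in_interval_mod_midpoint:
  fixes M a c x m :: int
  assumes "in_interval_mod (2*M) a c (x + m)" "in_interval_mod (2*M) a c (x - m)"
  shows "in_interval_mod M a c x"
proof -
  obtain y\<^sub>1 where y\<^sub>1: "y\<^sub>1 mod (2*M) = (x + m) mod (2*M)" "a < y\<^sub>1" "y\<^sub>1 < c"
    using assms(1) unfolding in_interval_mod_def by blast
  obtain y\<^sub>2 where y\<^sub>2: "y\<^sub>2 mod (2*M) = (x - m) mod (2*M)" "a < y\<^sub>2" "y\<^sub>2 < c"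
    using assms(2) unfolding in_interval_mod_def by blast
  have "2*M dvd (y\<^sub>1 - (x + m)) + (y\<^sub>2 - (x - m))"
    using y\<^sub>1(1) y\<^sub>2(1) by (intro dvd_add) (simp_all add: mod_eq_dvd_iff)
  then obtain k where "(y\<^sub>1 - (x + m)) + (y\<^sub>2 - (x - m)) = 2*M*k" ..
  then have k: "y\<^sub>1 + y\<^sub>2 = 2 * (x + M*k)"
    by (simp add: algebra_simps)
  have "(x + M*k) mod M = x mod M" "a < x + M*k" "x + M*k < c"
    using k y\<^sub>1(2,3) y\<^sub>2(2,3) by simp_all
  then show ?thesis
    unfolding in_interval_mod_def by blast
qed

lemma dvd_if_in_interval_mod_around_modulus:
  fixes M q x :: int
  assumes "in_interval_mod M (M - q) (M + q) x" "q dvd M" "q dvd x"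
  shows "M dvd x"
proof -
  obtain y where y: "y mod M = x mod M" "M - q < y" "y < M + q"
    using assms(1) unfolding in_interval_mod_def by blast
  have "q dvd y mod M"
    using y(1) assms(2,3) by (simp add: dvd_mod_iff)
  then have "q dvd y"
    using assms(2) by (simp add: dvd_mod_iff)
  then have "q dvd y - M"
    using assms(2) by (rule dvd_diff)
  moreover have "\<bar>y - M\<bar> < \<bar>q\<bar>"
    using y(2,3) by linarith
  ultimately have "y - M = 0"
    by (meson dvd_imp_le_int not_le)
  then show ?thesis
    using y(1) by (simp add: mod_eq_0_iff_dvd)
qed

theorem lemma12:
  fixes n b m :: int
  assumes "n > 0" "odd n" "b > 0" "odd b" "\<not> n dvd b" "m > 0" "even m"
  shows "\<not> (in_interval_mod (2*n) (n - gcd n b) (n + gcd n b) (b + m) \<and>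
             in_interval_mod (2*n) (n - gcd n b) (n + gcd n b) (b - m))"
proof
  assume "in_interval_mod (2*n) (n - gcd n b) (n + gcd n b) (b + m) \<and>
          in_interval_mod (2*n) (n - gcd n b) (n + gcd n b) (b - m)"
  then have "in_interval_mod n (n - gcd n b) (n + gcd n b) b"
    by (auto intro: in_interval_mod_midpoint)
  then have "n dvd b"
    by (rule dvd_if_in_interval_mod_around_modulus) simp_all
  with \<open>\<not> n dvd b\<close> show False ..
qed

end
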